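(* A topological space $(X,\tau)$ is a D-space if and only if for every continuous map $f:(X,\tau)\to(\mathcal P(X),\tau_{\mathcal S(X)})$ with $x\in f(x)$ for all $x\in X$, there exist a continuous neighborhood refinement map $f_*$ of $f$ and a closed discrete set $D\subseteq X$ such that the map $g:(X,\tau)\to(\mathcal P(D),\tau_{\mathcal S(D)})$, $g(x)=f_*(x)\cap D$, is continuous and satisfies $g^{-1}(\{\emptyset\})=\emptyset$.
   Context: For a set $A$ and $a\in A$, $\mathcal U_A(a)=\{B\subseteq A: a\in B\}$; the principal ultrafilter topology $\tau_{\mathcal S(A)}$ on $\mathcal P(A)$ is generated by the subbase $\{\mathcal U_A(a): a\in A\}$. A continuous neighborhood refinement map of $f$ is a continuous map $f_*:(X,\tau)\to(\mathcal P(X),\tau_{\mathcal S(X)})$ with $x\in f_*(x)\subseteq f(x)$ for all $x$. An open neighborhood assignment is $N:X\to\tau$ with $x\in N(x)$; $X$ is a D-space if every open neighborhood assignment $N$ admits a closed discrete $D\subseteq X$ with $\bigcup_{d\in D}N(d)=X$. *)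

theory Defs
  imports "HOL-Analysis.Analysis"
begin

definition U_set :: "'a set \<Rightarrow> 'a \<Rightarrow> 'a set set" where
  "U_set A a = {B. B \<subseteq> A \<and> a \<in> B}"

text \<open>Principal ultrafilter topology on the power set of A: generated by the subbase
  {U_A(a) | a in A}; the whole space Pow A is included so that the topological space
  is all of P(A) (including the empty set).\<close>
definition principal_ultrafilter_topology :: "'a set \<Rightarrow> 'a set topology" where
  "principal_ultrafilter_topology A =
     topology_generated_by (insert (Pow A) (U_set A ` A))"

definition closed_discrete :: "'a topology \<Rightarrow> 'a set \<Rightarrow> bool" where
  "closed_discrete X D \<longleftrightarrow> D \<subseteq> topspace X \<and> closedin X D \<and>
     (\<forall>d\<in>D. \<exists>U. openin X U \<and> U \<inter> D = {d})"

definition open_nbhd_assignment :: "'a topology \<Rightarrow> ('a \<Rightarrow> 'a set) \<Rightarrow> bool" where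
  "open_nbhd_assignment X N \<longleftrightarrow> (\<forall>x\<in>topspace X. openin X (N x) \<and> x \<in> N x)"

definition D_space :: "'a topology \<Rightarrow> bool" where
  "D_space X \<longleftrightarrow> (\<forall>N. open_nbhd_assignment X N \<longrightarrow>
     (\<exists>D. closed_discrete X D \<and> (\<Union>d\<in>D. N d) = topspace X))"

definition cont_nbhd_refinement :: "'a topology \<Rightarrow> ('a \<Rightarrow> 'a set) \<Rightarrow> ('a \<Rightarrow> 'a set) \<Rightarrow> bool" where
  "cont_nbhd_refinement X f fs \<longleftrightarrow>
     continuous_map X (principal_ultrafilter_topology (topspace X)) fs \<and>
     (\<forall>x\<in>topspace X. x \<in> fs x \<and> fs x \<subseteq> f x)"

end

theory Submission
  imports Defs
begin

text \<open>A map f with x \<in> f x is the same thing as a neighbourhood assignment, read through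
  N a = {x. a \<in> f x}; continuity into the principal ultrafilter topology says exactly that
  every N a is open. Under this correspondence f x \<inter> D \<noteq> {} means that x is covered by
  some N d with d \<in> D, so the condition on g is the covering property of a D-space.\<close>

lemma continuous_map_principal_ultrafilter_topology_iff:
  "continuous_map X (principal_ultrafilter_topology A) f \<longleftrightarrow>
     (\<forall>x\<in>topspace X. f x \<subseteq> A) \<and> (\<forall>a\<in>A. openin X {x\<in>topspace X. a \<in> f x})"
proof -
  have Union_subbase: "\<Union>(insert (Pow A) (U_set A ` A)) = Pow A"
    unfolding U_set_def by auto
  have preimage_U_set: "f -` U_set A a \<inter> topspace X = {x\<in>topspace X. a \<in> f x}"
    if "\<forall>x\<in>topspace X. f x \<subseteq> A" for a
    using that unfolding U_set_def by auto
  show ?thesis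
  proof
    assume cont: "continuous_map X (principal_ultrafilter_topology A) f"
    then have into_A: "\<forall>x\<in>topspace X. f x \<subseteq> A"
      unfolding principal_ultrafilter_topology_def continuous_on_generated_topo_iff
        Union_subbase by auto
    moreover have "openin X (f -` U_set A a \<inter> topspace X)" if "a \<in> A" for a
      using cont that
      unfolding principal_ultrafilter_topology_def continuous_on_generated_topo_iff by auto
    ultimately show "(\<forall>x\<in>topspace X. f x \<subseteq> A) \<and> (\<forall>a\<in>A. openin X {x\<in>topspace X. a \<in> f x})"
      using preimage_U_set by auto
  next
    assume fibres: "(\<forall>x\<in>topspace X. f x \<subseteq> A) \<and> (\<forall>a\<in>A. openin X {x\<in>topspace X. a \<in> f x})"
    show "continuous_map X (principal_ultrafilter_topology A) f"
      unfolding principal_ultrafilter_topology_def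
    proof (rule continuous_on_generated_topo)
      fix V assume "V \<in> insert (Pow A) (U_set A ` A)"
      then consider "V = Pow A" | a where "a \<in> A" "V = U_set A a" by auto
      then show "openin X (f -` V \<inter> topspace X)"
      proof cases
        case 1
        then have "f -` V \<inter> topspace X = topspace X" using fibres by auto
        then show ?thesis by simp
      next
        case 2
        then show ?thesis using fibres preimage_U_set by simp
      qed
    next
      show "f ` topspace X \<subseteq> \<Union>(insert (Pow A) (U_set A ` A))"
        using fibres Union_subbase by auto
    qed
  qed
qed

lemma continuous_map_principal_ultrafilter_topology_Int:
  assumes "continuous_map X (principal_ultrafilter_topology A) f" and "D \<subseteq> A"
  shows "continuous_map X (principal_ultrafilter_topology D) (\<lambda>x. f x \<inter> D)"
  using assms unfolding continuous_map_principal_ultrafilter_topology_iff by auto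

lemma open_nbhd_assignment_fibres:
  assumes "continuous_map X (principal_ultrafilter_topology (topspace X)) f"
    and "\<forall>x\<in>topspace X. x \<in> f x"
  shows "open_nbhd_assignment X (\<lambda>a. {x\<in>topspace X. a \<in> f x})"
  using assms
  unfolding open_nbhd_assignment_def continuous_map_principal_ultrafilter_topology_iff
  by auto

lemma continuous_map_nbhd_assignment_transpose:
  assumes "open_nbhd_assignment X N"
  shows "continuous_map X (principal_ultrafilter_topology (topspace X))
           (\<lambda>x. {a\<in>topspace X. x \<in> N a})"
proof -
  have "{x\<in>topspace X. a \<in> {a\<in>topspace X. x \<in> N a}} = N a" if "a \<in> topspace X" for a
    using assms that unfolding open_nbhd_assignment_def by (auto dest: openin_subset)
  then show ?thesis
    using assms
    unfolding continuous_map_principal_ultrafilter_topology_iff open_nbhd_assignment_def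
    by auto
qed

lemma D_spaceE:
  assumes "D_space X" and "open_nbhd_assignment X N"
  obtains D where "closed_discrete X D" and "(\<Union>d\<in>D. N d) = topspace X"
  using assms unfolding D_space_def by blast

lemma closed_discrete_subset: "closed_discrete X D \<Longrightarrow> D \<subseteq> topspace X"
  unfolding closed_discrete_def by simp

theorem mainTheorem19:
  fixes X :: "'a topology"
  shows "D_space X \<longleftrightarrow>
    (\<forall>f. continuous_map X (principal_ultrafilter_topology (topspace X)) f \<and>
         (\<forall>x\<in>topspace X. x \<in> f x) \<longrightarrow>
       (\<exists>fs D. cont_nbhd_refinement X f fs \<and> closed_discrete X D \<and>
          continuous_map X (principal_ultrafilter_topology D) (\<lambda>x. fs x \<inter> D) \<and>
          {x \<in> topspace X. fs x \<inter> D = {}} = {}))"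
    (is "_ \<longleftrightarrow> ?covering")
proof (intro iffI allI impI)
  fix f assume "D_space X"
    and f: "continuous_map X (principal_ultrafilter_topology (topspace X)) f \<and>
            (\<forall>x\<in>topspace X. x \<in> f x)"
  have "open_nbhd_assignment X (\<lambda>a. {x\<in>topspace X. a \<in> f x})"
    using f by (simp add: open_nbhd_assignment_fibres)
  with \<open>D_space X\<close> obtain D where D: "closed_discrete X D"
      "(\<Union>d\<in>D. {x\<in>topspace X. d \<in> f x}) = topspace X"
    by (rule D_spaceE)
  have "cont_nbhd_refinement X f f"
    using f unfolding cont_nbhd_refinement_def by simp
  moreover have "continuous_map X (principal_ultrafilter_topology D) (\<lambda>x. f x \<inter> D)"
    using f[THEN conjunct1] closed_discrete_subset[OF D(1)]
    by (rule continuous_map_principal_ultrafilter_topology_Int)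
  moreover have "{x \<in> topspace X. f x \<inter> D = {}} = {}"
    using D(2) by blast
  ultimately show "\<exists>fs D. cont_nbhd_refinement X f fs \<and> closed_discrete X D \<and>
      continuous_map X (principal_ultrafilter_topology D) (\<lambda>x. fs x \<inter> D) \<and>
      {x \<in> topspace X. fs x \<inter> D = {}} = {}"
    using D(1) by blast
next
  assume H: ?covering
  show "D_space X"
    unfolding D_space_def
  proof (intro allI impI)
    fix N assume N: "open_nbhd_assignment X N"
    define f where "f x = {a\<in>topspace X. x \<in> N a}" for x
    have "continuous_map X (principal_ultrafilter_topology (topspace X)) f"
      unfolding f_def using N by (rule continuous_map_nbhd_assignment_transpose)
    moreover have "\<forall>x\<in>topspace X. x \<in> f x"
      using N unfolding f_def open_nbhd_assignment_def by auto
    ultimately obtain fs D where fs: "cont_nbhd_refinement X f fs" "closed_discrete X D"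
        "{x \<in> topspace X. fs x \<inter> D = {}} = {}"
      using H by meson
    have "topspace X \<subseteq> (\<Union>d\<in>D. N d)"
      using fs unfolding cont_nbhd_refinement_def f_def by blast
    moreover have "(\<Union>d\<in>D. N d) \<subseteq> topspace X"
      using N closed_discrete_subset[OF fs(2)]
      unfolding open_nbhd_assignment_def by (auto dest: openin_subset)
    ultimately show "\<exists>D. closed_discrete X D \<and> (\<Union>d\<in>D. N d) = topspace X"
      using fs(2) by blast
  qed
qed

end
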